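(* Let $v\ge1$ and write $S_{m,v,1}=\sum_{i=0}^{v}q_{v,i}\,m^{2i}$ (identity valid for all integers $m\ge1$). Then $$q_{v,v}=\frac{2\zeta(2v)}{\pi^{2v}},\qquad q_{v,i}=\frac{2^{2v-2i+1}}{\pi^{2i}}\frac{\Gamma(2i)}{\Gamma(2v)}s(v,v-i)\zeta(2i)=\frac{2}{\pi^{2i}}\,c_{2v,v-i}\,\zeta(2i)\quad(1\le i\le v-1),$$ $$q_{v,0}=-2^{2v+1}\sum_{n=0}^{v-1}(2\pi)^{2n-2v}\frac{\Gamma(2v-2n)}{\Gamma(2v)}s(v,n)\zeta(2v-2n)=-2\sum_{n=0}^{v-1}\pi^{2n-2v}c_{2v,n}\zeta(2v-2n),$$ and $$q_{v,1}=\frac16\,\frac{\Gamma(v)\Gamma(1/2)}{\Gamma(v+1/2)}.$$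
   Context: $S_{m,v,1}=\sum_{k=1}^{m-1}\csc^{2v}(k\pi/m)$ is the untwisted Dowker sum, which for fixed $v$ agrees for all integers $m\ge1$ with a polynomial in $m^2$ of degree $v$. For integers $v\ge1$ and $0\le n\le v-1$, $s(v,n)$ denotes the $n$-th elementary symmetric polynomial evaluated at $1^2,2^2,\dots,(v-1)^2$, with $s(v,0)=1$. The generalized cosecant numbers $c_{\rho,k}$ are the coefficients in $\left(\frac{x}{\sin x}\right)^{\rho}=\sum_{k\ge0}c_{\rho,k}x^{2k}$. $\zeta$ is the Riemann zeta function. *)

theory Defs
  imports "HOL-Analysis.Analysis" "HOL-Computational_Algebra.Formal_Power_Series"
begin

definition dowker_sum :: "nat \<Rightarrow> nat \<Rightarrow> real" where
  "dowker_sum m v = (\<Sum>k=1..<m. (1 / sin (real k * pi / real m)) ^ (2 * v))"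

definition esym_sq :: "nat \<Rightarrow> nat \<Rightarrow> real" where
  "esym_sq v n = (\<Sum>A\<in>{A. A \<subseteq> {1..<v} \<and> card A = n}. \<Prod>j\<in>A. real j ^ 2)"

text \<open>Generalized cosecant numbers: (x / sin x)^rho = sum_k c_{rho,k} x^(2k).\<close>
definition cosec_num :: "nat \<Rightarrow> nat \<Rightarrow> real" where
  "cosec_num \<rho> k = fps_nth ((inverse (fps_shift 1 (fps_sin (1::real)))) ^ \<rho>) (2 * k)"

text \<open>Riemann zeta at integer arguments s \<ge> 2 (Dirichlet series).\<close>
definition zeta_int :: "nat \<Rightarrow> real" where
  "zeta_int s = (\<Sum>n. 1 / real (Suc n) ^ s)"

end

theory Submission
  imports Defs
begin

(*
  Expanding (x / sin x)^(2v) = sum_{j<v} c_{2v,j} x^(2j) + O(x^(2v)) at 0 and using the symmetry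
  y -> pi - y, the function csc^(2v) y differs from its principal parts
  sum_{j<v} c_{2v,j} (y^(2j-2v) + (pi - y)^(2j-2v)) by a function that is bounded on (0, pi).
  At y = k pi / m, summed over k, the principal parts become partial sums of zeta(2v - 2j), whose
  tails are O(m^(2j-2v+1)). Hence S_{m,v,1} = sum_{i=1..v} 2 pi^(-2i) c_{2v,v-i} zeta(2i) m^(2i) + O(m),
  and since a polynomial in m^2 that is O(m) is constant, this determines q_1, ..., q_v; q_0 then
  follows from S_{1,v,1} = 0.
  The closed form c_{2v,k} = 4^k (2v-2k-1)! / (2v-1)! s(v,k) holds because both sides satisfy the
  same recursion in v: for the cosecant numbers it comes from a second order linear ODE satisfied by
  (x / sin x)^n. Legendre's duplication formula turns c_{2v,v-1} into the Gamma quotient of q_1.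
*)

section \<open>The power series of x / sin x\<close>

definition sinc_fps :: "real fps" where
  "sinc_fps = fps_shift 1 (fps_sin 1)"

definition x_over_sin_fps :: "real fps" where
  "x_over_sin_fps = inverse sinc_fps"

lemma sinc_fps_nth_0 [simp]: "fps_nth sinc_fps 0 = 1"
  by (simp add: sinc_fps_def fps_sin_def)

lemma fps_sin_eq_fps_X_mult_sinc_fps: "fps_sin 1 = fps_X * sinc_fps"
  by (rule fps_ext) (auto simp: sinc_fps_def fps_X_mult_nth fps_sin_def)

lemma sinc_fps_mult_x_over_sin_fps: "sinc_fps * x_over_sin_fps = 1"
  by (simp add: x_over_sin_fps_def inverse_mult_eq_1')

lemma x_over_sin_fps_nth_0 [simp]: "fps_nth x_over_sin_fps 0 = 1"
  by (simp add: x_over_sin_fps_def)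

lemma cosec_num_eq_fps_nth: "cosec_num r k = fps_nth (x_over_sin_fps ^ r) (2 * k)"
  by (simp add: cosec_num_def x_over_sin_fps_def sinc_fps_def)

lemma cosec_num_0 [simp]: "cosec_num r 0 = 1"
  by (simp add: cosec_num_eq_fps_nth fps_nth_power_0)

lemma x_over_sin_fps_compose_neg: "x_over_sin_fps oo - fps_X = x_over_sin_fps"
proof -
  have "sinc_fps oo - fps_X = sinc_fps"
    by (rule fps_ext) (auto simp: fps_compose_uminus' sinc_fps_def fps_sin_def)
  then show ?thesis
    by (simp add: x_over_sin_fps_def fps_inverse_compose)
qed

lemma x_over_sin_fps_power_nth_odd:
  assumes "odd n"
  shows "fps_nth (x_over_sin_fps ^ r) n = 0"
proof -
  have "fps_nth (x_over_sin_fps ^ r) n = fps_nth (x_over_sin_fps ^ r oo - fps_X) n"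
    using fps_compose_power[of "- fps_X" x_over_sin_fps r]
    by (simp add: x_over_sin_fps_compose_neg)
  also have "\<dots> = - fps_nth (x_over_sin_fps ^ r) n"
    using assms by (simp add: fps_compose_uminus')
  finally have "fps_nth (x_over_sin_fps ^ r) n = - fps_nth (x_over_sin_fps ^ r) n" .
  then show ?thesis
    by simp
qed

lemma x_over_sin_fps_power_ode:
  fixes n :: nat
  assumes "n \<ge> 2"
  defines "W \<equiv> x_over_sin_fps" and "N \<equiv> (of_nat n :: real fps)"
  shows "fps_X\<^sup>2 * fps_deriv (fps_deriv (W ^ n)) - 2 * N * fps_X * fps_deriv (W ^ n)
      + N * (N + 1) * W ^ n + N\<^sup>2 * fps_X\<^sup>2 * W ^ n = N * (N + 1) * W ^ (n + 2)"
proof -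
  define s where "s = fps_sin (1::real)"
  define c where "c = fps_cos (1::real)"
  define W1 where "W1 = fps_deriv W"
  define W2 where "W2 = fps_deriv W1"
  define k where "k = n - 2"
  have k: "n = k + 2"
    using assms(1) by (simp add: k_def)
  define P where "P = W ^ k"
  have X_eq: "fps_X = s * W"
    by (simp add: s_def W_def fps_sin_eq_fps_X_mult_sinc_fps mult.assoc sinc_fps_mult_x_over_sin_fps)
  have pyth: "c\<^sup>2 + s\<^sup>2 = 1"
    unfolding s_def c_def by (rule fps_sin_cos_sum_of_squares)
  have deriv1: "s * W1 = 1 - c * W"
  proof -
    have "fps_deriv (s * W) = 1"
      by (simp flip: X_eq)
    then show ?thesis
      by (simp add: s_def c_def W1_def fps_sin_deriv algebra_simps)
  qed
  have deriv2: "s * W2 = s * W - 2 * c * W1"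
  proof -
    have "fps_deriv (s * W1 + c * W) = 0"
      by (simp add: deriv1)
    then show ?thesis
      by (simp add: s_def c_def W1_def W2_def fps_sin_deriv fps_cos_deriv algebra_simps
          fps_const_neg[symmetric] del: fps_const_neg)
  qed
  have d1: "fps_deriv (W ^ n) = N * W1 * P * W"
    unfolding fps_deriv_power' N_def W1_def P_def k by (simp add: mult_ac)
  have d2: "fps_deriv (fps_deriv (W ^ n)) = N * (W2 * P * W + (N - 1) * W1\<^sup>2 * P)"
  proof -
    have dP: "fps_deriv P * W = of_nat k * W1 * P"
      unfolding P_def W1_def fps_deriv_power' by (cases k) (simp_all add: algebra_simps)
    have "fps_deriv (N * W1 * P * W) = N * (W2 * P * W + W1 * (fps_deriv P * W) + W1 * P * W1)"
      by (simp add: N_def W2_def algebra_simps flip: W1_def)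
    also have "\<dots> = N * (W2 * P * W + (N - 1) * W1\<^sup>2 * P)"
      unfolding dP by (simp add: N_def k W1_def algebra_simps power2_eq_square)
    finally show ?thesis
      unfolding d1 .
  qed
  have powers: "W ^ n = P * W ^ 2" "W ^ (n + 2) = P * W ^ 4"
    unfolding P_def k power_add[symmetric] by (simp_all only: add.assoc numeral_plus_numeral semiring_norm)
  show ?thesis
    unfolding d2 unfolding d1 unfolding powers X_eq using deriv1 deriv2 pyth by algebra
qed

lemma fps_nth_rec_of_ode:
  fixes G H :: "real fps" and n m :: nat
  assumes ode: "fps_X\<^sup>2 * fps_deriv (fps_deriv G) - 2 * of_nat n * fps_X * fps_deriv G
      + of_nat n * (of_nat n + 1) * G + (of_nat n)\<^sup>2 * fps_X\<^sup>2 * G = of_nat n * (of_nat n + 1) * H"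
    and m: "m \<ge> 2"
  shows "real n * (real n + 1) * fps_nth H m
    = (real n - real m) * (real n - real m + 1) * fps_nth G m + (real n)\<^sup>2 * fps_nth G (m - 2)"
proof -
  have as_const: "2 * (of_nat n :: real fps) * fps_X * F = fps_X * (fps_const (2 * real n) * F)"
    "(of_nat n :: real fps)\<^sup>2 * fps_X\<^sup>2 * F = fps_X\<^sup>2 * (fps_const ((real n)\<^sup>2) * F)"
    "(of_nat n :: real fps) * (of_nat n + 1) * F = fps_const (real n * (real n + 1)) * F" for F
    by (simp_all add: algebra_simps numeral_fps_const flip: fps_of_nat fps_const_1_eq_1 fps_const_add)
  have idx: "m - 2 + 1 = m - 1" "m - 1 + 1 = m" "m - 2 + 2 = m" "\<not> m < 2" "\<not> m < 1" "m \<noteq> 0"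
    using m by auto
  have "fps_nth (fps_X\<^sup>2 * fps_deriv (fps_deriv G) - fps_X * (fps_const (2 * real n) * fps_deriv G)
      + fps_const (real n * (real n + 1)) * G + fps_X\<^sup>2 * (fps_const ((real n)\<^sup>2) * G)) m
      = fps_nth (fps_const (real n * (real n + 1)) * H) m"
    using ode unfolding as_const by simp
  then have "real (m - 2 + 1) * (real (m - 2 + 1 + 1) * fps_nth G m)
      - 2 * real n * (real (m - 1 + 1) * fps_nth G m)
      + real n * (real n + 1) * fps_nth G m + (real n)\<^sup>2 * fps_nth G (m - 2)
      = real n * (real n + 1) * fps_nth H m"
    unfolding fps_add_nth fps_sub_nth fps_X_power_mult_nth fps_X_mult_nth fps_deriv_nth
      fps_mult_left_const_nth
    using idx by (simp del: of_nat_add add: idx)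
  moreover have "real (m - 2 + 1) = real m - 1" "real (m - 2 + 1 + 1) = real m"
    "real (m - 1 + 1) = real m"
    using m by auto
  ultimately show ?thesis
    by (simp add: algebra_simps)
qed

lemma x_over_sin_fps_power_nth_rec:
  assumes "n \<ge> 2" and "m \<ge> 2"
  shows "real n * (real n + 1) * fps_nth (x_over_sin_fps ^ (n + 2)) m
    = (real n - real m) * (real n - real m + 1) * fps_nth (x_over_sin_fps ^ n) m
      + (real n)\<^sup>2 * fps_nth (x_over_sin_fps ^ n) (m - 2)"
  by (rule fps_nth_rec_of_ode[OF x_over_sin_fps_power_ode[OF assms(1)] assms(2)])

lemma cosec_num_even_rec:
  assumes "v \<ge> 1" and "k \<ge> 1"
  shows "2 * real v * (2 * real v + 1) * cosec_num (2 * v + 2) k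
    = (2 * real v - 2 * real k) * (2 * real v - 2 * real k + 1) * cosec_num (2 * v) k
      + 4 * (real v)\<^sup>2 * cosec_num (2 * v) (k - 1)"
proof -
  have "2 * k - 2 = 2 * (k - 1)"
    by simp
  then show ?thesis
    using x_over_sin_fps_power_nth_rec[of "2 * v" "2 * k"] assms
    by (simp add: cosec_num_eq_fps_nth power2_eq_square)
qed

section \<open>Cosecant numbers and elementary symmetric functions of squares\<close>

lemma subsets_insert_card_Suc:
  assumes "finite F" and "x \<notin> F"
  shows "{A. A \<subseteq> insert x F \<and> card A = Suc k}
    = {A. A \<subseteq> F \<and> card A = Suc k} \<union> insert x ` {A. A \<subseteq> F \<and> card A = k}"
proof (intro equalityI subsetI)
  fix A
  assume "A \<in> {A. A \<subseteq> insert x F \<and> card A = Suc k}"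
  then have A: "A \<subseteq> insert x F" "card A = Suc k" "finite A"
    using assms(1) finite_subset by auto
  show "A \<in> {A. A \<subseteq> F \<and> card A = Suc k} \<union> insert x ` {A. A \<subseteq> F \<and> card A = k}"
  proof (cases "x \<in> A")
    case True
    then have "A = insert x (A - {x})" "A - {x} \<in> {A. A \<subseteq> F \<and> card A = k}"
      using A by auto
    then show ?thesis
      by blast
  next
    case False
    then show ?thesis
      using A by (auto simp: subset_insert)
  qed
next
  fix A
  assume "A \<in> {A. A \<subseteq> F \<and> card A = Suc k} \<union> insert x ` {A. A \<subseteq> F \<and> card A = k}"
  then show "A \<in> {A. A \<subseteq> insert x F \<and> card A = Suc k}"
    using assms by (auto simp: card_insert_if finite_subset)
qed

lemma esym_sq_0 [simp]: "esym_sq v 0 = 1"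
proof -
  have "{A. A \<subseteq> {1..<v} \<and> card A = 0} = {{}}"
    using finite_subset[of _ "{1..<v}"] by auto
  then show ?thesis
    by (simp add: esym_sq_def)
qed

lemma esym_sq_eq_0:
  assumes "v \<le> n" and "0 < n"
  shows "esym_sq v n = 0"
proof -
  have "card A \<noteq> n" if "A \<subseteq> {1..<v}" for A
    using card_mono[OF finite_atLeastLessThan that] assms by simp
  then have none: "{A. A \<subseteq> {1..<v} \<and> card A = n} = {}"
    by blast
  show ?thesis
    unfolding esym_sq_def none by simp
qed

lemma esym_sq_top: "esym_sq v (v - 1) = fact (v - 1) ^ 2"
proof -
  have "A \<subseteq> {1..<v} \<Longrightarrow> card A = v - 1 \<Longrightarrow> A = {1..<v}" for A
    by (rule card_subset_eq) auto
  then have "{A. A \<subseteq> {1..<v} \<and> card A = v - 1} = {{1..<v}}"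
    by auto
  then have "esym_sq v (v - 1) = (\<Prod>j = 1..<v. real j) ^ 2"
    by (simp add: esym_sq_def prod_power_distrib)
  also have "(\<Prod>j = 1..<v. real j) = fact (v - 1)"
    by (cases v) (simp_all add: fact_prod atLeastLessThanSuc_atLeastAtMost)
  finally show ?thesis .
qed

lemma esym_sq_Suc_Suc:
  assumes "v \<ge> 1"
  shows "esym_sq (Suc v) (Suc k) = esym_sq v (Suc k) + (real v)\<^sup>2 * esym_sq v k"
proof -
  let ?F = "\<lambda>n. {A. A \<subseteq> {1..<v} \<and> card A = n}"
  let ?p = "\<lambda>A. \<Prod>j\<in>A. (real j)\<^sup>2"
  have fin: "finite (?F n)" for n
    by (rule finite_subset[of _ "Pow {1..<v}"]) auto
  have "{1..<Suc v} = insert v {1..<v}"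
    using assms by auto
  then have split: "{A. A \<subseteq> {1..<Suc v} \<and> card A = Suc k} = ?F (Suc k) \<union> insert v ` ?F k"
    by (simp add: subsets_insert_card_Suc)
  have inj: "inj_on (insert v) (?F k)"
    by (rule inj_onI) (metis atLeastLessThan_iff insert_ident less_irrefl mem_Collect_eq subsetD)
  have "esym_sq (Suc v) (Suc k) = sum ?p (?F (Suc k)) + sum ?p (insert v ` ?F k)"
    unfolding esym_sq_def split by (rule sum.union_disjoint) (auto simp: fin)
  also have "sum ?p (insert v ` ?F k) = (\<Sum>A\<in>?F k. (real v)\<^sup>2 * ?p A)"
    unfolding sum.reindex[OF inj, unfolded comp_def]
    by (intro sum.cong refl prod.insert) (auto dest: finite_subset)
  finally show ?thesis
    by (simp add: esym_sq_def sum_distrib_left)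
qed

definition cosec_closed_form :: "nat \<Rightarrow> nat \<Rightarrow> real" where
  "cosec_closed_form v k = 4 ^ k * fact (2 * v - 2 * k - 1) / fact (2 * v - 1) * esym_sq v k"

lemma cosec_closed_form_rec:
  assumes "1 \<le> k" and "k \<le> v"
  shows "2 * real v * (2 * real v + 1) * cosec_closed_form (Suc v) k
    = (2 * real v - 2 * real k) * (2 * real v - 2 * real k + 1) * cosec_closed_form v k
      + 4 * (real v)\<^sup>2 * cosec_closed_form v (k - 1)"
proof -
  define r where "r = v - k"
  have idx: "2 * Suc v - 2 * k - 1 = 2 * r + 1" "2 * v - 2 * (k - 1) - 1 = 2 * r + 1"
    "2 * real v - 2 * real k = 2 * real r"
    using assms by (auto simp: r_def)
  have fact_2v: "fact (2 * Suc v - 1) = fact (2 * v - 1) * (2 * real v * (2 * real v + 1))"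
    using assms by (cases v) (simp_all add: algebra_simps)
  have fact_2r: "2 * real r * (2 * real r + 1) * fact (2 * v - 2 * k - 1) * esym_sq v k
      = fact (2 * r + 1) * esym_sq v k"
  proof (cases "r = 0")
    case True
    (* here fact (2 * v - 2 * k - 1) is the junk value fact 0, but esym_sq v v vanishes *)
    then show ?thesis
      using assms esym_sq_eq_0[of v k] by (simp add: r_def)
  next
    case False
    then have "fact (2 * r + 1) = (2 * real r + 1) * (2 * real r) * fact (2 * r - 1)"
      by (cases r) (simp_all add: algebra_simps)
    moreover have "2 * v - 2 * k - 1 = 2 * r - 1"
      by (simp add: r_def)
    ultimately show ?thesis
      by (simp add: algebra_simps)
  qed
  obtain j where j: "k = Suc j"
    using assms(1) by (cases k) auto
  have esym: "esym_sq (Suc v) k = esym_sq v k + (real v)\<^sup>2 * esym_sq v (k - 1)"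
    using esym_sq_Suc_Suc[of v j] assms j by simp
  have pow4: "(4::real) ^ k = 4 * 4 ^ (k - 1)"
    using j by simp
  define c :: real where "c = 4 ^ k * fact (2 * r + 1) / fact (2 * v - 1)"
  have "cosec_closed_form (Suc v) k = c / (2 * real v * (2 * real v + 1)) * esym_sq (Suc v) k"
    unfolding cosec_closed_form_def fact_2v idx c_def by simp
  moreover have "2 * real v * (2 * real v + 1) \<noteq> 0"
    using assms by simp
  ultimately have "2 * real v * (2 * real v + 1) * cosec_closed_form (Suc v) k = c * esym_sq (Suc v) k"
    by simp
  also have "\<dots> = c * esym_sq v k + c * (real v)\<^sup>2 * esym_sq v (k - 1)"
    by (simp add: esym distrib_left)
  also have "c * esym_sq v k = (2 * real r) * (2 * real r + 1) * cosec_closed_form v k"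
  proof -
    have "(2 * real r) * (2 * real r + 1) * cosec_closed_form v k
        = 4 ^ k / fact (2 * v - 1) * (2 * real r * (2 * real r + 1) * fact (2 * v - 2 * k - 1) * esym_sq v k)"
      by (simp add: cosec_closed_form_def)
    then show ?thesis
      unfolding fact_2r by (simp add: c_def)
  qed
  also have "c * (real v)\<^sup>2 * esym_sq v (k - 1) = 4 * (real v)\<^sup>2 * cosec_closed_form v (k - 1)"
    unfolding cosec_closed_form_def idx c_def pow4 by simp
  finally show ?thesis
    unfolding idx .
qed

lemma cosec_num_eq_closed_form:
  assumes "k < v"
  shows "cosec_num (2 * v) k = cosec_closed_form v k"
  using assms
proof (induction v arbitrary: k)
  case 0
  then show ?case
    by simp
next
  case (Suc v)
  show ?case
  proof (cases "k = 0")
    case True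
    then show ?thesis
      by (simp add: cosec_closed_form_def)
  next
    case False
    then have k: "1 \<le> k" "k \<le> v" "1 \<le> v"
      using Suc.prems by auto
    (* for k = v the coefficient vanishes, so the induction hypothesis is only needed for k < v *)
    have top: "(2 * real v - 2 * real k) * (2 * real v - 2 * real k + 1) * cosec_num (2 * v) k
        = (2 * real v - 2 * real k) * (2 * real v - 2 * real k + 1) * cosec_closed_form v k"
      using Suc.IH[of k] k by (cases "k = v") simp_all
    have "2 * real v * (2 * real v + 1) * cosec_num (2 * Suc v) k
        = 2 * real v * (2 * real v + 1) * cosec_closed_form (Suc v) k"
      using cosec_num_even_rec[of v k] cosec_closed_form_rec[of k v] Suc.IH[of "k - 1"] top k
      by simp
    then show ?thesis
      using k by simp
  qed
qed

section \<open>Principal parts of the even cosecant powers\<close>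

lemma has_fps_expansion_power:
  fixes F :: "'a :: {banach, real_normed_div_algebra, comm_ring_1} fps"
  assumes "f has_fps_expansion F"
  shows "(\<lambda>x. f x ^ k) has_fps_expansion F ^ k"
  by (induction k) (auto intro!: has_fps_expansion_mult assms)

lemma has_fps_expansion_taylor_bound:
  fixes f :: "real \<Rightarrow> real"
  assumes "f has_fps_expansion F"
  shows "\<exists>d>0. \<exists>K. \<forall>x. x \<noteq> 0 \<and> \<bar>x\<bar> < d \<longrightarrow> \<bar>f x - (\<Sum>n<N. fps_nth F n * x ^ n)\<bar> \<le> K * \<bar>x\<bar> ^ N"
proof -
  define Q where "Q = (\<Sum>n<N. fps_const (fps_nth F n) * fps_X ^ n)"
  define E where "E = fps_shift N (F - Q)"
  define g where "g x = f x - (\<Sum>n<N. fps_nth F n * x ^ n)" for x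
  have "g has_fps_expansion F - Q"
    unfolding g_def[abs_def] Q_def
    by (intro has_fps_expansion_diff assms has_fps_expansion_sum has_fps_expansion_cmult_left
        has_fps_expansion_fps_X_power)
  then have radius: "fps_conv_radius (F - Q) > 0"
    and near: "eventually (\<lambda>x. eval_fps (F - Q) x = g x) (nhds 0)"
    by (auto simp: has_fps_expansion_def)
  have "fps_nth Q n = (if n < N then fps_nth F n else 0)" for n
    by (simp add: Q_def fps_sum_nth fps_X_power_nth if_distrib[of "(*) _"] sum.delta' cong: if_cong)
  then have split: "F - Q = E * fps_X ^ N"
    by (intro fps_ext) (simp add: E_def fps_X_power_mult_right_nth)
  have radius_E: "fps_conv_radius E > 0"
    using radius by (simp add: E_def)
  then have "isCont (eval_fps E) 0"
    by (intro continuous_eval_fps) (simp add: zero_ereal_def)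
  then have "eventually (\<lambda>x. dist (eval_fps E x) (eval_fps E 0) < 1) (at 0)"
    unfolding isCont_def by (rule tendstoD) simp
  then have "eventually (\<lambda>x. dist (eval_fps E x) (eval_fps E 0) < 1) (nhds 0)"
    unfolding eventually_at_filter by (rule eventually_mono) auto
  moreover have "eventually (\<lambda>x. x \<in> eball 0 (fps_conv_radius E)) (nhds 0)"
    using radius_E by (intro eventually_nhds_in_open) (auto simp: zero_ereal_def)
  ultimately have "eventually (\<lambda>x. eval_fps (F - Q) x = g x \<and> x \<in> eball 0 (fps_conv_radius E)
      \<and> dist (eval_fps E x) (eval_fps E 0) < 1) (nhds (0::real))"
    using near by eventually_elim auto
  then obtain d where d: "d > 0" and P: "\<And>x. dist x 0 < d \<Longrightarrow> eval_fps (F - Q) x = g x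
      \<and> x \<in> eball 0 (fps_conv_radius E) \<and> dist (eval_fps E x) (eval_fps E 0) < 1"
    unfolding eventually_nhds_metric by blast
  have "\<bar>g x\<bar> \<le> (\<bar>eval_fps E 0\<bar> + 1) * \<bar>x\<bar> ^ N" if "\<bar>x\<bar> < d" for x
  proof -
    from P[of x] that have "g x = eval_fps E x * x ^ N" "\<bar>eval_fps E x - eval_fps E 0\<bar> < 1"
      by (auto simp: split eval_fps_mult dist_real_def)
    then show ?thesis
      by (auto simp: abs_mult power_abs intro!: mult_right_mono)
  qed
  then show ?thesis
    using d unfolding g_def by blast
qed

lemma x_over_sin_has_fps_expansion:
  "(\<lambda>x::real. if x = 0 then 1 else x / sin x) has_fps_expansion x_over_sin_fps"
proof -
  have "1 \<le> subdegree (fps_sin (1::real))"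
    by (rule subdegree_geI) (auto simp: fps_eq_iff fps_sin_def intro!: exI[of _ 1])
  then have "(\<lambda>x::real. if x = 0 then 1 else sin x / x ^ 1) has_fps_expansion sinc_fps"
    unfolding sinc_fps_def by (rule has_fps_expansion_shift[OF has_fps_expansion_sin']) (simp add: fps_sin_def)
  then have "(\<lambda>x. inverse (if x = 0 then 1 else sin x / x ^ 1)) has_fps_expansion x_over_sin_fps"
    unfolding x_over_sin_fps_def by (rule has_fps_expansion_inverse) simp
  moreover have "(\<lambda>x::real. inverse (if x = 0 then 1 else sin x / x ^ 1)) = (\<lambda>x. if x = 0 then 1 else x / sin x)"
    by auto
  ultimately show ?thesis
    by simp
qed

lemma sum_lessThan_double: "(\<Sum>n<2 * (N::nat). f n) = (\<Sum>j<N. f (2 * j) + f (2 * j + 1))"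
  by (induction N) (simp_all add: add_ac)

lemma x_over_sin_power_taylor_bound:
  "\<exists>d>0. \<exists>K. \<forall>x. 0 < x \<and> x < d \<longrightarrow>
     \<bar>(x / sin x) ^ (2 * v) - (\<Sum>j<v. cosec_num (2 * v) j * x ^ (2 * j))\<bar> \<le> K * x ^ (2 * v)"
proof -
  have "(\<lambda>x::real. (if x = 0 then 1 else x / sin x) ^ (2 * v)) has_fps_expansion x_over_sin_fps ^ (2 * v)"
    by (intro has_fps_expansion_power x_over_sin_has_fps_expansion)
  from has_fps_expansion_taylor_bound[OF this, of "2 * v"]
  obtain d K where "d > 0" and bound: "\<And>x. x \<noteq> 0 \<Longrightarrow> \<bar>x\<bar> < d \<Longrightarrow>
      \<bar>(x / sin x) ^ (2 * v) - (\<Sum>n<2 * v. fps_nth (x_over_sin_fps ^ (2 * v)) n * x ^ n)\<bar> \<le> K * \<bar>x\<bar> ^ (2 * v)"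
    by auto
  have even: "(\<Sum>n<2 * v. fps_nth (x_over_sin_fps ^ (2 * v)) n * x ^ n)
      = (\<Sum>j<v. cosec_num (2 * v) j * x ^ (2 * j))" for x :: real
    unfolding sum_lessThan_double by (simp add: x_over_sin_fps_power_nth_odd cosec_num_eq_fps_nth)
  show ?thesis
  proof (intro exI conjI allI impI)
    fix x :: real
    assume "0 < x \<and> x < d"
    then show "\<bar>(x / sin x) ^ (2 * v) - (\<Sum>j<v. cosec_num (2 * v) j * x ^ (2 * j))\<bar> \<le> K * x ^ (2 * v)"
      using bound[of x] by (simp add: even)
  qed (fact \<open>d > 0\<close>)
qed

lemma csc_power_minus_principal_part_bounded:
  "\<exists>B. \<forall>y. 0 < y \<and> y \<le> pi / 2 \<longrightarrow>
     \<bar>(1 / sin y) ^ (2 * v) - (\<Sum>j<v. cosec_num (2 * v) j * (1 / y) ^ (2 * v - 2 * j))\<bar> \<le> B"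
proof -
  define e where "e y = (1 / sin y) ^ (2 * v) - (\<Sum>j<v. cosec_num (2 * v) j * (1 / y) ^ (2 * v - 2 * j))"
    for y :: real
  obtain d K where "d > 0" and K: "\<And>y. 0 < y \<Longrightarrow> y < d \<Longrightarrow>
      \<bar>(y / sin y) ^ (2 * v) - (\<Sum>j<v. cosec_num (2 * v) j * y ^ (2 * j))\<bar> \<le> K * y ^ (2 * v)"
    using x_over_sin_power_taylor_bound[of v] by blast
  have near_0: "\<bar>e y\<bar> \<le> K" if "0 < y" "y < d" for y
  proof -
    have "(\<Sum>j<v. cosec_num (2 * v) j * y ^ (2 * j)) / y ^ (2 * v)
        = (\<Sum>j<v. cosec_num (2 * v) j * (1 / y) ^ (2 * v - 2 * j))"
      unfolding sum_divide_distrib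
    proof (intro sum.cong refl)
      fix j
      assume "j \<in> {..<v}"
      then have "y ^ (2 * v) = y ^ (2 * j) * y ^ (2 * v - 2 * j)"
        by (simp flip: power_add)
      then show "cosec_num (2 * v) j * y ^ (2 * j) / y ^ (2 * v) = cosec_num (2 * v) j * (1 / y) ^ (2 * v - 2 * j)"
        using \<open>0 < y\<close> by (simp add: power_one_over)
    qed
    then have "e y = ((y / sin y) ^ (2 * v) - (\<Sum>j<v. cosec_num (2 * v) j * y ^ (2 * j))) / y ^ (2 * v)"
      using \<open>0 < y\<close> by (simp add: e_def diff_divide_distrib power_divide)
    then show ?thesis
      using K[OF that] \<open>0 < y\<close> by (simp add: abs_divide pos_divide_le_eq)
  qed
  have "continuous_on {d / 2..pi / 2} e"
  proof -
    have "sin y \<noteq> 0 \<and> y \<noteq> 0" if "y \<in> {d / 2..pi / 2}" for y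
      using that \<open>d > 0\<close> sin_gt_zero[of y] pi_gt3 by auto
    then show ?thesis
      unfolding e_def by (intro continuous_intros) auto
  qed
  then have "bounded (e ` {d / 2..pi / 2})"
    by (intro compact_imp_bounded compact_continuous_image compact_Icc)
  then obtain a where a: "\<And>y. y \<in> {d / 2..pi / 2} \<Longrightarrow> \<bar>e y\<bar> \<le> a"
    unfolding bounded_iff real_norm_def by blast
  have "\<bar>e y\<bar> \<le> max K a" if "0 < y" "y \<le> pi / 2" for y
    using near_0[of y] a[of y] that by (cases "y < d") auto
  then show ?thesis
    unfolding e_def by blast
qed

definition csc_power_remainder :: "nat \<Rightarrow> real \<Rightarrow> real" where
  "csc_power_remainder v y = (1 / sin y) ^ (2 * v)
    - (\<Sum>j<v. cosec_num (2 * v) j * ((1 / y) ^ (2 * v - 2 * j) + (1 / (pi - y)) ^ (2 * v - 2 * j)))"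

lemma csc_power_remainder_bounded:
  "\<exists>B. \<forall>y. 0 < y \<and> y < pi \<longrightarrow> \<bar>csc_power_remainder v y\<bar> \<le> B"
proof -
  define c where "c j = cosec_num (2 * v) j" for j
  define R where "R = csc_power_remainder v"
  obtain B where B: "\<And>y. 0 < y \<Longrightarrow> y \<le> pi / 2 \<Longrightarrow>
      \<bar>(1 / sin y) ^ (2 * v) - (\<Sum>j<v. c j * (1 / y) ^ (2 * v - 2 * j))\<bar> \<le> B"
    unfolding c_def using csc_power_minus_principal_part_bounded[of v] by blast
  define B' where "B' = B + (\<Sum>j<v. \<bar>c j\<bar> * (2 / pi) ^ (2 * v - 2 * j))"
  have half: "\<bar>R y\<bar> \<le> B'" if "0 < y" "y \<le> pi / 2" for y
  proof -
    have far: "\<bar>\<Sum>j<v. c j * (1 / (pi - y)) ^ (2 * v - 2 * j)\<bar> \<le> (\<Sum>j<v. \<bar>c j\<bar> * (2 / pi) ^ (2 * v - 2 * j))"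
    proof (rule order.trans[OF sum_abs sum_mono])
      fix j
      have "0 \<le> 1 / (pi - y)" "1 / (pi - y) \<le> 2 / pi"
        using that pi_gt3 by (auto simp: field_simps)
      then show "\<bar>c j * (1 / (pi - y)) ^ (2 * v - 2 * j)\<bar> \<le> \<bar>c j\<bar> * (2 / pi) ^ (2 * v - 2 * j)"
        by (auto simp: abs_mult intro!: mult_left_mono power_mono)
    qed
    have "R y = ((1 / sin y) ^ (2 * v) - (\<Sum>j<v. c j * (1 / y) ^ (2 * v - 2 * j)))
        - (\<Sum>j<v. c j * (1 / (pi - y)) ^ (2 * v - 2 * j))"
      by (simp add: R_def c_def csc_power_remainder_def distrib_left sum.distrib)
    then show ?thesis
      unfolding B'_def using B[OF that] far by linarith
  qed
  have "\<bar>R y\<bar> \<le> B'" if "0 < y" "y < pi" for y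
  proof (cases "y \<le> pi / 2")
    case False
    have "R (pi - y) = R y"
      by (simp add: R_def csc_power_remainder_def add.commute)
    then show ?thesis
      using half[of "pi - y"] that False by simp
  qed (use half that in auto)
  then show ?thesis
    unfolding R_def by blast
qed

section \<open>Tails of the zeta series\<close>

lemma summable_inverse_power_Suc: "s \<ge> 2 \<Longrightarrow> summable (\<lambda>n. 1 / real (Suc n) ^ s)"
  using inverse_power_summable[of s] summable_Suc_iff[of "\<lambda>n. inverse (real n ^ s)"]
  by (simp add: inverse_eq_divide)

lemma zeta_int_minus_partial_sum:
  assumes "s \<ge> 2" and "m \<ge> 1"
  shows "zeta_int s - (\<Sum>k = 1..<m. (1 / real k) ^ s) = (\<Sum>n. 1 / real (n + m) ^ s)"
proof -
  have "zeta_int s = (\<Sum>n. 1 / real (Suc (n + (m - 1))) ^ s) + (\<Sum>n<m - 1. 1 / real (Suc n) ^ s)"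
    unfolding zeta_int_def by (rule suminf_split_initial_segment[OF summable_inverse_power_Suc[OF assms(1)]])
  moreover have "(\<Sum>n<m - 1. 1 / real (Suc n) ^ s) = (\<Sum>k = 1..<m. (1 / real k) ^ s)"
    using assms(2) sum.shift_bounds_Suc_ivl[of "\<lambda>k. (1 / real k) ^ s" 0 "m - 1"]
    by (simp add: atLeast0LessThan power_one_over)
  ultimately show ?thesis
    using assms(2) by simp
qed

lemma suminf_inverse_power_tail_bounds:
  assumes "s \<ge> 2" and "m \<ge> 2"
  shows "0 \<le> (\<Sum>n. 1 / real (n + m) ^ s)" and "(\<Sum>n. 1 / real (n + m) ^ s) \<le> 2 * (1 / real m) ^ (s - 1)"
proof -
  define g where "g n = 1 / (real n + real m - 1)" for n :: nat
  define c :: real where "c = (1 / real m) ^ (s - 2)"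
  have "g \<longlonglongrightarrow> 0"
    unfolding g_def by real_asymp
  then have telescope: "(\<lambda>n. c * (g n - g (Suc n))) sums (c * (1 / (real m - 1)))"
    using sums_mult[OF telescope_sums', of g 0 c] by (simp add: g_def)
  have term_le: "1 / real (n + m) ^ s \<le> c * (g n - g (Suc n))" for n
  proof -
    define a where "a = real (n + m)"
    have a: "a \<ge> 2"
      using assms by (simp add: a_def)
    have "a ^ s = a ^ (s - 2) * a\<^sup>2"
      using assms(1) by (metis le_add_diff_inverse2 power_add)
    then have "1 / a ^ s = (1 / a) ^ (s - 2) * (1 / a\<^sup>2)"
      by (simp add: power_one_over)
    also have "\<dots> \<le> c * (1 / ((a - 1) * a))"
    proof (rule mult_mono)
      show "(1 / a) ^ (s - 2) \<le> c"
        unfolding c_def using assms by (intro power_mono) (auto simp: a_def field_simps)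
      show "1 / a\<^sup>2 \<le> 1 / ((a - 1) * a)"
        using a by (simp add: field_simps power2_eq_square)
    qed (auto simp: c_def)
    also have "1 / ((a - 1) * a) = g n - g (Suc n)"
      using a by (simp add: g_def a_def field_simps)
    finally show ?thesis
      by (simp add: a_def)
  qed
  have summable: "summable (\<lambda>n. 1 / real (n + m) ^ s)"
    using summable_ignore_initial_segment[OF summable_inverse_power_Suc[OF assms(1)], of "m - 1"] assms
    by (simp add: Suc_diff_le)
  then show "0 \<le> (\<Sum>n. 1 / real (n + m) ^ s)"
    by (simp add: suminf_nonneg)
  from summable have "(\<Sum>n. 1 / real (n + m) ^ s) \<le> (\<Sum>n. c * (g n - g (Suc n)))"
    using telescope by (intro suminf_le term_le) (auto simp: sums_iff)
  also have "\<dots> = c * (1 / (real m - 1))"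
    using telescope by (simp add: sums_iff)
  also have "\<dots> \<le> c * (2 / real m)"
    using assms by (intro mult_left_mono) (auto simp: c_def field_simps)
  also have "\<dots> = 2 * (1 / real m) ^ (s - 1)"
  proof -
    have "s - 1 = Suc (s - 2)"
      using assms(1) by simp
    then show ?thesis
      by (simp add: c_def)
  qed
  finally show "(\<Sum>n. 1 / real (n + m) ^ s) \<le> 2 * (1 / real m) ^ (s - 1)" .
qed

lemma zeta_int_minus_partial_sum_bounds:
  assumes "s \<ge> 2" and "m \<ge> 2"
  shows "0 \<le> zeta_int s - (\<Sum>k = 1..<m. (1 / real k) ^ s)"
    and "zeta_int s - (\<Sum>k = 1..<m. (1 / real k) ^ s) \<le> 2 * (1 / real m) ^ (s - 1)"
  using zeta_int_minus_partial_sum[OF assms(1), of m] suminf_inverse_power_tail_bounds[OF assms] assms(2)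
  by simp_all

lemma zeta_int_2: "zeta_int 2 = pi\<^sup>2 / 6"
  using inverse_squares_sums by (simp add: zeta_int_def sums_iff add.commute)

section \<open>The coefficients of the Dowker polynomial\<close>

lemma sum_inverse_power_grid:
  assumes "m \<ge> 1"
  shows "(\<Sum>k = 1..<m. (1 / (real k * pi / real m)) ^ s + (1 / (pi - real k * pi / real m)) ^ s)
    = 2 * (real m / pi) ^ s * (\<Sum>k = 1..<m. (1 / real k) ^ s)"
proof -
  have left: "(1 / (real k * pi / real m)) ^ s = (real m / pi) ^ s * (1 / real k) ^ s" for k
    by (simp add: power_divide power_one_over field_simps)
  have right: "(1 / (pi - real k * pi / real m)) ^ s = (real m / pi) ^ s * (1 / real (m - k)) ^ s"
    if "k \<in> {1..<m}" for k
  proof -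
    have eq: "pi - real k * pi / real m = real (m - k) * pi / real m"
      using that assms by (simp add: of_nat_diff field_simps)
    show ?thesis
      unfolding eq by (simp add: power_divide power_one_over field_simps)
  qed
  have reflect: "(\<Sum>k = 1..<m. (1 / real (m - k)) ^ s) = (\<Sum>k = 1..<m. (1 / real k) ^ s)"
    by (subst sum.atLeastLessThan_rev) (intro sum.cong refl, auto)
  have "(\<Sum>k = 1..<m. (1 / (real k * pi / real m)) ^ s + (1 / (pi - real k * pi / real m)) ^ s)
      = (\<Sum>k = 1..<m. (real m / pi) ^ s * (1 / real k) ^ s + (real m / pi) ^ s * (1 / real (m - k)) ^ s)"
    by (intro sum.cong refl) (simp only: left right)
  also have "\<dots> = (real m / pi) ^ s * ((\<Sum>k = 1..<m. (1 / real k) ^ s) + (\<Sum>k = 1..<m. (1 / real (m - k)) ^ s))"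
    by (simp only: sum.distrib sum_distrib_left distrib_left)
  finally show ?thesis
    unfolding reflect by simp
qed

lemma sum_atLeast1_atMost_rev: "(\<Sum>i = 1..n. f i) = (\<Sum>j<n. f (n - j :: nat))"
proof -
  have "(\<Sum>j<n. f (n - j)) = (\<Sum>i = 1..n. f (n - (n - i)))"
    using sum.atLeastLessThan_rev_at_least_Suc_atMost[of "\<lambda>j. f (n - j)" 0 n]
    by (simp add: atLeast0LessThan)
  also have "\<dots> = (\<Sum>i = 1..n. f i)"
    by (intro sum.cong) auto
  finally show ?thesis ..
qed

lemma dowker_sum_eq_remainder_sum:
  assumes "m \<ge> 1"
  shows "dowker_sum m v = (\<Sum>k = 1..<m. csc_power_remainder v (real k * pi / real m))
    + (\<Sum>j<v. 2 * cosec_num (2 * v) j * (real m / pi) ^ (2 * v - 2 * j)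
        * (\<Sum>k = 1..<m. (1 / real k) ^ (2 * v - 2 * j)))"
proof -
  define P where "P k j = (1 / (real k * pi / real m)) ^ (2 * v - 2 * j)
    + (1 / (pi - real k * pi / real m)) ^ (2 * v - 2 * j)" for k j
  have "dowker_sum m v = (\<Sum>k = 1..<m. csc_power_remainder v (real k * pi / real m)
      + (\<Sum>j<v. cosec_num (2 * v) j * P k j))"
    by (simp add: dowker_sum_def csc_power_remainder_def P_def)
  also have "\<dots> = (\<Sum>k = 1..<m. csc_power_remainder v (real k * pi / real m))
      + (\<Sum>j<v. cosec_num (2 * v) j * (\<Sum>k = 1..<m. P k j))"
    by (simp add: sum.distrib sum_distrib_left sum.swap[where B = "{..<v}"])
  also have "\<dots> = (\<Sum>k = 1..<m. csc_power_remainder v (real k * pi / real m))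
      + (\<Sum>j<v. 2 * cosec_num (2 * v) j * (real m / pi) ^ (2 * v - 2 * j)
          * (\<Sum>k = 1..<m. (1 / real k) ^ (2 * v - 2 * j)))"
    using assms sum_inverse_power_grid[of m] by (simp add: P_def mult_ac)
  finally show ?thesis .
qed

lemma dowker_sum_asymptotics:
  "\<exists>K. \<forall>m\<ge>2. \<bar>dowker_sum m v
     - (\<Sum>i = 1..v. 2 / pi ^ (2 * i) * cosec_num (2 * v) (v - i) * zeta_int (2 * i) * real m ^ (2 * i))\<bar>
     \<le> K * real m"
proof -
  define c where "c j = cosec_num (2 * v) j" for j
  define s where "s j = 2 * v - 2 * j" for j
  obtain B where B: "\<And>y. 0 < y \<Longrightarrow> y < pi \<Longrightarrow> \<bar>csc_power_remainder v y\<bar> \<le> B"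
    using csc_power_remainder_bounded[of v] by blast
  define K where "K = B + (\<Sum>j<v. 4 * \<bar>c j\<bar> / pi ^ s j)"
  have "\<bar>dowker_sum m v
      - (\<Sum>i = 1..v. 2 / pi ^ (2 * i) * cosec_num (2 * v) (v - i) * zeta_int (2 * i) * real m ^ (2 * i))\<bar>
      \<le> K * real m" if m: "m \<ge> 2" for m
  proof -
    define M where "M = real m"
    define H where "H j = (\<Sum>k = 1..<m. (1 / real k) ^ s j)" for j
    define remainder where "remainder = (\<Sum>k = 1..<m. csc_power_remainder v (real k * pi / M))"
    have "(\<Sum>i = 1..v. 2 / pi ^ (2 * i) * cosec_num (2 * v) (v - i) * zeta_int (2 * i) * M ^ (2 * i))
        = (\<Sum>j<v. 2 * c j * (M / pi) ^ s j * zeta_int (s j))"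
      unfolding sum_atLeast1_atMost_rev
      by (intro sum.cong refl) (auto simp: c_def s_def power_divide diff_mult_distrib2)
    then have diff: "dowker_sum m v
        - (\<Sum>i = 1..v. 2 / pi ^ (2 * i) * cosec_num (2 * v) (v - i) * zeta_int (2 * i) * M ^ (2 * i))
        = remainder - (\<Sum>j<v. 2 * c j * (M / pi) ^ s j * (zeta_int (s j) - H j))"
      using dowker_sum_eq_remainder_sum[of m v] m
      by (simp add: remainder_def c_def s_def H_def M_def right_diff_distrib sum_subtractf)
    have "\<bar>remainder\<bar> \<le> (\<Sum>k = 1..<m. B)"
      unfolding remainder_def
      by (rule order.trans[OF sum_abs sum_mono]) (auto intro!: B simp: M_def field_simps)
    also have "\<dots> \<le> B * M"
      using B[of "pi / 2"] m abs_ge_zero[of "csc_power_remainder v (pi / 2)"]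
      by (simp add: M_def of_nat_diff algebra_simps)
    finally have remainder_bound: "\<bar>remainder\<bar> \<le> B * M" .
    have "\<bar>2 * c j * (M / pi) ^ s j * (zeta_int (s j) - H j)\<bar> \<le> 4 * \<bar>c j\<bar> / pi ^ s j * M"
      if "j < v" for j
    proof -
      have s: "s j \<ge> 2"
        using that by (simp add: s_def)
      note tail = zeta_int_minus_partial_sum_bounds[OF s m, folded H_def M_def]
      have "\<bar>2 * c j * (M / pi) ^ s j * (zeta_int (s j) - H j)\<bar>
          = 2 * \<bar>c j\<bar> * (M / pi) ^ s j * (zeta_int (s j) - H j)"
        using tail(1) m by (simp add: abs_mult M_def)
      also have "\<dots> \<le> 2 * \<bar>c j\<bar> * (M / pi) ^ s j * (2 * (1 / M) ^ (s j - 1))"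
        using tail(2) m by (intro mult_left_mono) (auto simp: M_def)
      also have "\<dots> = 4 * \<bar>c j\<bar> / pi ^ s j * (M ^ s j * (1 / M) ^ (s j - 1))"
        by (simp add: power_divide)
      also have "M ^ s j * (1 / M) ^ (s j - 1) = M"
        using s m by (simp add: M_def power_one_over power_diff)
      finally show ?thesis .
    qed
    then have zeta_error: "\<bar>\<Sum>j<v. 2 * c j * (M / pi) ^ s j * (zeta_int (s j) - H j)\<bar>
        \<le> (\<Sum>j<v. 4 * \<bar>c j\<bar> / pi ^ s j) * M"
      unfolding sum_distrib_right by (intro order.trans[OF sum_abs sum_mono]) auto
    show ?thesis
      unfolding M_def[symmetric] diff K_def distrib_right
      using abs_triangle_ineq4 remainder_bound zeta_error by (rule order.trans[OF _ add_mono])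
  qed
  then show ?thesis
    by blast
qed

lemma even_poly_linear_bound_imp_coeffs_eq_0:
  fixes a :: "nat \<Rightarrow> real"
  assumes "\<forall>m\<ge>2. \<bar>\<Sum>i = 1..n. a i * real m ^ (2 * i)\<bar> \<le> K * real m"
    and "i \<in> {1..n}"
  shows "a i = 0"
  using assms
proof (induction n arbitrary: i)
  case 0
  then show ?case
    by simp
next
  case (Suc n)
  define x where "x m = 1 / real m" for m :: nat
  have x: "x \<longlonglongrightarrow> 0"
    unfolding x_def by (rule lim_1_over_n)
  have scaled: "(\<Sum>i = 1..Suc n. a i * real m ^ (2 * i)) / real m ^ (2 * Suc n)
      = a (Suc n) + (\<Sum>i = 1..n. a i * x m ^ (2 * (Suc n - i)))" if "m \<ge> 1" for m
  proof -
    define p where "p = real m ^ (2 * Suc n)"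
    have "p \<noteq> 0"
      using that by (simp add: p_def)
    have "a i * real m ^ (2 * i) / p = a i * x m ^ (2 * (Suc n - i))" if "i \<le> n" for i
      using that \<open>m \<ge> 1\<close> by (simp add: p_def x_def power_one_over power_diff diff_mult_distrib2)
    then have "(\<Sum>i = 1..n. a i * real m ^ (2 * i)) / p = (\<Sum>i = 1..n. a i * x m ^ (2 * (Suc n - i)))"
      unfolding sum_divide_distrib by (intro sum.cong) auto
    with \<open>p \<noteq> 0\<close> show ?thesis
      unfolding p_def[symmetric] by (simp add: add_divide_distrib p_def)
  qed
  have "(\<Sum>i = 1..n. a i * 0 ^ (2 * (Suc n - i))) = 0"
    by (intro sum.neutral) auto
  moreover have "(\<lambda>m. a (Suc n) + (\<Sum>i = 1..n. a i * x m ^ (2 * (Suc n - i))))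
      \<longlonglongrightarrow> a (Suc n) + (\<Sum>i = 1..n. a i * 0 ^ (2 * (Suc n - i)))"
    by (intro tendsto_intros x)
  ultimately have "(\<lambda>m. a (Suc n) + (\<Sum>i = 1..n. a i * x m ^ (2 * (Suc n - i)))) \<longlonglongrightarrow> a (Suc n)"
    by simp
  moreover have "eventually (\<lambda>m. a (Suc n) + (\<Sum>i = 1..n. a i * x m ^ (2 * (Suc n - i)))
      = (\<Sum>i = 1..Suc n. a i * real m ^ (2 * i)) / real m ^ (2 * Suc n)) sequentially"
    by (rule eventually_mono[OF eventually_ge_at_top[of 1]]) (rule scaled[symmetric])
  ultimately have "(\<lambda>m. (\<Sum>i = 1..Suc n. a i * real m ^ (2 * i)) / real m ^ (2 * Suc n)) \<longlonglongrightarrow> a (Suc n)"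
    by (rule Lim_transform_eventually)
  then have "(\<lambda>m. \<bar>(\<Sum>i = 1..Suc n. a i * real m ^ (2 * i)) / real m ^ (2 * Suc n)\<bar>) \<longlonglongrightarrow> \<bar>a (Suc n)\<bar>"
    by (rule tendsto_rabs)
  moreover have "(\<lambda>m. K * x m ^ (2 * n + 1)) \<longlonglongrightarrow> K * 0 ^ (2 * n + 1)"
    by (intro tendsto_intros x)
  moreover have "\<bar>(\<Sum>i = 1..Suc n. a i * real m ^ (2 * i)) / real m ^ (2 * Suc n)\<bar> \<le> K * x m ^ (2 * n + 1)"
    if "m \<ge> 2" for m
    using Suc.prems(1) that by (simp add: x_def abs_divide divide_le_eq power_one_over field_simps)
  ultimately have "\<bar>a (Suc n)\<bar> \<le> 0"
    by (intro tendsto_le[OF sequentially_bot]) (auto intro: eventually_mono[OF eventually_ge_at_top[of 2]])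
  then have top: "a (Suc n) = 0"
    by simp
  show ?case
  proof (cases "i = Suc n")
    case False
    then show ?thesis
      using Suc.prems top by (intro Suc.IH) auto
  qed (use top in simp)
qed

lemma Gamma_of_nat_eq_fact: "n \<ge> 1 \<Longrightarrow> Gamma (real n) = fact (n - 1)"
  using Gamma_fact[of "n - 1", where 'a = real] by (simp add: of_nat_diff)

lemma cosec_num_even_eq_Gamma:
  assumes "k < v"
  shows "2 * cosec_num (2 * v) k = 2 ^ (2 * k + 1) * (Gamma (real (2 * v - 2 * k)) / Gamma (real (2 * v))) * esym_sq v k"
proof -
  have "Gamma (real (2 * v - 2 * k)) = fact (2 * v - 2 * k - 1)" "Gamma (real (2 * v)) = fact (2 * v - 1)"
    using assms by (simp_all only: Gamma_of_nat_eq_fact)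
  then show ?thesis
    using assms by (simp add: cosec_num_eq_closed_form cosec_closed_form_def power_mult)
qed

lemma Gamma_legendre_duplication_real:
  fixes x :: real
  assumes "x > 0"
  shows "Gamma x * Gamma (x + 1 / 2) = 2 powr (1 - 2 * x) * sqrt pi * Gamma (2 * x)"
proof -
  have "x \<notin> \<int>\<^sub>\<le>\<^sub>0" "x + 1 / 2 \<notin> \<int>\<^sub>\<le>\<^sub>0"
    using assms by (auto dest: nonpos_Ints_nonpos)
  then have "complex_of_real x \<notin> \<int>\<^sub>\<le>\<^sub>0" "complex_of_real x + 1 / 2 \<notin> \<int>\<^sub>\<le>\<^sub>0"
    using of_real_in_nonpos_Ints_iff[of "x + 1 / 2", where 'a = complex]
    by (auto simp: of_real_in_nonpos_Ints_iff)
  from Gamma_legendre_duplication[OF this]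
  have "complex_of_real (Gamma x * Gamma (x + 1 / 2))
      = complex_of_real (exp ((1 - 2 * x) * ln 2) * sqrt pi * Gamma (2 * x))"
    by (simp flip: Gamma_complex_of_real exp_of_real)
  then show ?thesis
    by (simp only: of_real_eq_iff) (simp add: powr_def mult_ac)
qed

lemma Gamma_mult_Gamma_half_div:
  fixes x :: real
  assumes "x > 0"
  shows "Gamma x * Gamma (1 / 2) / Gamma (x + 1 / 2) = 2 powr (2 * x - 1) * Gamma x ^ 2 / Gamma (2 * x)"
proof -
  have pos: "Gamma x > 0" "Gamma (2 * x) > 0" "Gamma (x + 1 / 2) > 0"
    using assms by (simp_all add: Gamma_real_pos)
  have "Gamma x * Gamma (x + 1 / 2) * 2 powr (2 * x - 1)
      = 2 powr (1 - 2 * x) * 2 powr (2 * x - 1) * (sqrt pi * Gamma (2 * x))"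
    unfolding Gamma_legendre_duplication_real[OF assms] by (simp only: mult_ac)
  also have "2 powr (1 - 2 * x) * 2 powr (2 * x - 1) = (1::real)"
    by (simp flip: powr_add)
  finally have legendre: "sqrt pi * Gamma (2 * x) = Gamma x * Gamma (x + 1 / 2) * 2 powr (2 * x - 1)"
    by simp
  have "Gamma x * Gamma (1 / 2) / Gamma (x + 1 / 2)
      = Gamma x * (sqrt pi * Gamma (2 * x)) / (Gamma (x + 1 / 2) * Gamma (2 * x))"
    using pos by (simp add: Gamma_one_half_real)
  also have "\<dots> = 2 powr (2 * x - 1) * Gamma x ^ 2 / Gamma (2 * x)"
    unfolding legendre using pos by (simp add: power2_eq_square)
  finally show ?thesis .
qed

definition dowker_poly_coeffs :: "nat \<Rightarrow> (nat \<Rightarrow> real) \<Rightarrow> bool" where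
  "dowker_poly_coeffs v q \<longleftrightarrow> (\<forall>m::nat. m \<ge> 1 \<longrightarrow> dowker_sum m v = (\<Sum>i\<le>v. q i * real m ^ (2 * i)))"

lemma dowker_coeff_eq_cosec:
  assumes q: "dowker_poly_coeffs v q" and i: "i \<in> {1..v}"
  shows "q i = 2 / pi ^ (2 * i) * cosec_num (2 * v) (v - i) * zeta_int (2 * i)"
proof -
  define A where "A i = 2 / pi ^ (2 * i) * cosec_num (2 * v) (v - i) * zeta_int (2 * i)" for i
  obtain K where K: "\<And>m. m \<ge> 2 \<Longrightarrow> \<bar>dowker_sum m v - (\<Sum>i = 1..v. A i * real m ^ (2 * i))\<bar> \<le> K * real m"
    using dowker_sum_asymptotics[of v] unfolding A_def by blast
  have "\<bar>\<Sum>i = 1..v. (q i - A i) * real m ^ (2 * i)\<bar> \<le> (K + \<bar>q 0\<bar>) * real m" if "m \<ge> 2" for m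
  proof -
    have "dowker_sum m v = q 0 + (\<Sum>i = 1..v. q i * real m ^ (2 * i))"
      using q that by (simp add: dowker_poly_coeffs_def atLeast0AtMost[symmetric] sum.atLeast_Suc_atMost)
    then have "(\<Sum>i = 1..v. (q i - A i) * real m ^ (2 * i))
        = (dowker_sum m v - (\<Sum>i = 1..v. A i * real m ^ (2 * i))) - q 0"
      by (simp add: left_diff_distrib sum_subtractf)
    moreover have "\<bar>q 0\<bar> \<le> \<bar>q 0\<bar> * real m"
      using that by (simp add: mult_le_cancel_left1)
    ultimately show ?thesis
      using K[OF that] by (simp add: distrib_right abs_triangle_ineq4 order.trans[OF abs_triangle_ineq4])
  qed
  then have "q i - A i = 0"
    using even_poly_linear_bound_imp_coeffs_eq_0[of "\<lambda>i. q i - A i" v "K + \<bar>q 0\<bar>" i] i by blast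
  then show ?thesis
    by (simp add: A_def)
qed

lemma dowker_coeff_eq_Gamma:
  assumes q: "dowker_poly_coeffs v q" and i: "i \<in> {1..v - 1}"
  shows "q i = 2 ^ (2 * v - 2 * i + 1) / pi ^ (2 * i) * (Gamma (real (2 * i)) / Gamma (real (2 * v)))
    * esym_sq v (v - i) * zeta_int (2 * i)"
proof -
  have "v - i < v" "2 * v - 2 * (v - i) = 2 * i" "2 * (v - i) + 1 = 2 * v - 2 * i + 1"
    using i by auto
  then show ?thesis
    using dowker_coeff_eq_cosec[OF q, of i] cosec_num_even_eq_Gamma[of "v - i" v] i by simp
qed

lemma dowker_coeff_0_eq_neg_sum:
  assumes "dowker_poly_coeffs v q"
  shows "q 0 = - (\<Sum>i = 1..v. q i)"
proof -
  have "dowker_sum 1 v = 0"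
    by (simp add: dowker_sum_def)
  then show ?thesis
    using assms by (simp add: dowker_poly_coeffs_def atLeast0AtMost[symmetric] sum.atLeast_Suc_atMost)
qed

lemma dowker_coeff_0_eq_cosec:
  assumes q: "dowker_poly_coeffs v q"
  shows "q 0 = - 2 * (\<Sum>n<v. (1 / pi ^ (2 * v - 2 * n)) * cosec_num (2 * v) n * zeta_int (2 * v - 2 * n))"
proof -
  have "(\<Sum>i = 1..v. q i) = (\<Sum>n<v. q (v - n))"
    by (rule sum_atLeast1_atMost_rev)
  also have "\<dots> = 2 * (\<Sum>n<v. (1 / pi ^ (2 * v - 2 * n)) * cosec_num (2 * v) n * zeta_int (2 * v - 2 * n))"
    unfolding sum_distrib_left
    by (intro sum.cong refl) (auto simp: dowker_coeff_eq_cosec[OF q] diff_mult_distrib2)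
  finally show ?thesis
    using dowker_coeff_0_eq_neg_sum[OF q] by simp
qed

lemma dowker_coeff_0_eq_Gamma:
  assumes q: "dowker_poly_coeffs v q"
  shows "q 0 = - (2 ^ (2 * v + 1)) * (\<Sum>n<v. (1 / (2 * pi) ^ (2 * v - 2 * n))
    * (Gamma (real (2 * v - 2 * n)) / Gamma (real (2 * v))) * esym_sq v n * zeta_int (2 * v - 2 * n))"
proof -
  have "2 ^ (2 * v + 1) * ((1 / (2 * pi) ^ (2 * v - 2 * n)) * G * esym_sq v n * zeta_int (2 * v - 2 * n))
      = 2 * ((1 / pi ^ (2 * v - 2 * n)) * cosec_num (2 * v) n * zeta_int (2 * v - 2 * n))"
    if "n < v" and G: "G = Gamma (real (2 * v - 2 * n)) / Gamma (real (2 * v))" for n G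
  proof -
    have "(2::real) ^ (2 * v + 1) = 2 ^ (2 * v - 2 * n) * 2 ^ (2 * n + 1)"
      using that by (simp flip: power_add)
    then have "2 ^ (2 * v + 1) * ((1 / (2 * pi) ^ (2 * v - 2 * n)) * G * esym_sq v n * zeta_int (2 * v - 2 * n))
        = (2 ^ (2 * n + 1) * G * esym_sq v n) * zeta_int (2 * v - 2 * n) / pi ^ (2 * v - 2 * n)"
      by (simp add: power_mult_distrib)
    also have "2 ^ (2 * n + 1) * G * esym_sq v n = 2 * cosec_num (2 * v) n"
      using cosec_num_even_eq_Gamma[OF \<open>n < v\<close>] G by simp
    finally show ?thesis
      by simp
  qed
  then have "2 ^ (2 * v + 1) * (\<Sum>n<v. (1 / (2 * pi) ^ (2 * v - 2 * n))
      * (Gamma (real (2 * v - 2 * n)) / Gamma (real (2 * v))) * esym_sq v n * zeta_int (2 * v - 2 * n))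
      = 2 * (\<Sum>n<v. (1 / pi ^ (2 * v - 2 * n)) * cosec_num (2 * v) n * zeta_int (2 * v - 2 * n))"
    unfolding sum_distrib_left by (intro sum.cong refl) auto
  then show ?thesis
    using dowker_coeff_0_eq_cosec[OF q] by (simp only: mult_minus_left)
qed

lemma dowker_coeff_1_eq_Gamma:
  assumes v: "v \<ge> 1" and q: "dowker_poly_coeffs v q"
  shows "q 1 = 1 / 6 * (Gamma (real v) * Gamma (1 / 2) / Gamma (real v + 1 / 2))"
proof -
  have q_1: "q 1 = 1 / 3 * cosec_num (2 * v) (v - 1)"
    using dowker_coeff_eq_cosec[OF q, of 1] v by (simp add: zeta_int_2)
  have "2 * v - 2 * (v - 1) - 1 = 1"
    using v by simp
  then have cosec: "cosec_num (2 * v) (v - 1) = 4 ^ (v - 1) * fact (v - 1) ^ 2 / fact (2 * v - 1)"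
    using v esym_sq_top[of v] by (simp add: cosec_num_eq_closed_form cosec_closed_form_def)
  have exponent: "2 * real v - 1 = real (Suc (2 * (v - 1)))"
    using v by (simp add: of_nat_diff)
  have pow: "2 powr (2 * real v - 1) = 2 * 4 ^ (v - 1)"
    unfolding exponent powr_realpow[OF zero_less_numeral] by (simp add: power_mult)
  have "Gamma (real v) * Gamma (1 / 2) / Gamma (real v + 1 / 2)
      = 2 powr (2 * real v - 1) * fact (v - 1) ^ 2 / fact (2 * v - 1)"
    using Gamma_mult_Gamma_half_div[of "real v"] v Gamma_of_nat_eq_fact[of v] Gamma_of_nat_eq_fact[of "2 * v"]
    by simp
  then show ?thesis
    unfolding q_1 cosec pow by simp
qed

theorem mainTheorem10:
  fixes v :: nat and q :: "nat \<Rightarrow> real"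
  assumes hv: "v \<ge> 1"
    and hq: "\<forall>m::nat. m \<ge> 1 \<longrightarrow> dowker_sum m v = (\<Sum>i\<le>v. q i * real m ^ (2 * i))"
  shows "(q v = 2 * zeta_int (2 * v) / pi ^ (2 * v))
    \<and> (\<forall>i\<in>{1..v-1}.
           q i = 2 ^ (2 * v - 2 * i + 1) / pi ^ (2 * i) * (Gamma (real (2 * i)) / Gamma (real (2 * v)))
                 * esym_sq v (v - i) * zeta_int (2 * i)
         \<and> q i = 2 / pi ^ (2 * i) * cosec_num (2 * v) (v - i) * zeta_int (2 * i))
    \<and> q 0 = - (2 ^ (2 * v + 1)) * (\<Sum>n<v. (1 / (2 * pi) ^ (2 * v - 2 * n))
                 * (Gamma (real (2 * v - 2 * n)) / Gamma (real (2 * v))) * esym_sq v n * zeta_int (2 * v - 2 * n))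
    \<and> q 0 = - 2 * (\<Sum>n<v. (1 / pi ^ (2 * v - 2 * n)) * cosec_num (2 * v) n * zeta_int (2 * v - 2 * n))
    \<and> q 1 = 1 / 6 * (Gamma (real v) * Gamma (1 / 2) / Gamma (real v + 1 / 2))"
proof -
  have q: "dowker_poly_coeffs v q"
    using hq unfolding dowker_poly_coeffs_def .
  have "q v = 2 * zeta_int (2 * v) / pi ^ (2 * v)"
    using dowker_coeff_eq_cosec[OF q, of v] hv by simp
  moreover have "q i = 2 / pi ^ (2 * i) * cosec_num (2 * v) (v - i) * zeta_int (2 * i)" if "i \<in> {1..v - 1}" for i
    using that by (intro dowker_coeff_eq_cosec[OF q]) auto
  ultimately show ?thesis
    using dowker_coeff_eq_Gamma[OF q] dowker_coeff_0_eq_Gamma[OF q] dowker_coeff_0_eq_cosec[OF q]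
      dowker_coeff_1_eq_Gamma[OF hv q]
    by blast
qed

end
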